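(* Let $\mathcal{G}\in\Gamma_N$ with eigenvalues $1,\lambda_2,\dots,\lambda_N$ of $\mathcal{D}$ ($|\lambda_i|<1$ for $i\ge2$), and let $h_1,\dots,h_N\in\mathbf{R}^n$ be a formation. If $A+BK$ and $A+(1-\lambda_i)LC$, $i=2,\dots,N$, are Schur stable and $(A-I)(h_i-h_j)=0$ for all $i,j$, then under the formation protocol, for every initial condition, $\|x_i(k)-h_i-x_j(k)+h_j\|\to0$ as $k\to\infty$ for all $i,j=1,\dots,N$.
   Context: Agents: $x_i(k+1)=Ax_i(k)+Bu_i(k)$, $y_i=Cx_i$, $i=1,\dots,N$, with $A\in\mathbf{R}^{n\times n}$, $B\in\mathbf{R}^{n\times p}$, $C\in\mathbf{R}^{q\times n}$. For a directed graph $\mathcal{G}$ on $\{1,\dots,N\}$, its row-stochastic matrix $\mathcal{D}=(d_{ij})$ has $d_{ii}>0$, $d_{ij}>0$ ($j\ne i$) iff $(j,i)$ is an edge, $0$ otherwise, row sums $1$; $\Gamma_N$ is the set of such graphs containing a directed spanning tree. Formation protocol with $K\in\mathbf{R}^{p\times n}$, $L\in\mathbf{R}^{n\times q}$: $\tilde\zeta_i=\sum_jd_{ij}\big(y_i-y_j-C(h_i-h_j)\big)$, $v_i(k+1)=(A+BK)v_i+L\big(\sum_jd_{ij}C(v_i-v_j)-\tilde\zeta_i\big)$, $u_i=Kv_i$, $v_i\in\mathbf{R}^n$. Schur stable: all eigenvalues of modulus $<1$. *)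

theory Defs
  imports Complex_Main "Jordan_Normal_Form.Matrix" "Jordan_Normal_Form.Char_Poly"
begin

text \<open>Agents and graph vertices are indexed by 0..<N.\<close>

definition cmat :: "real mat \<Rightarrow> complex mat" where
  "cmat M = map_mat complex_of_real M"

definition schur_stable :: "complex mat \<Rightarrow> bool" where
  "schur_stable M \<longleftrightarrow> (\<forall>\<mu>. eigenvalue M \<mu> \<longrightarrow> cmod \<mu> < 1)"

text \<open>A directed graph on vertices 0..<N given by its edge set; (j,i) is the edge from j to i.\<close>
definition is_digraph :: "nat \<Rightarrow> (nat \<times> nat) set \<Rightarrow> bool" where
  "is_digraph N E \<longleftrightarrow> E \<subseteq> {(j,i). j < N \<and> i < N \<and> j \<noteq> i}"

definition has_spanning_tree :: "nat \<Rightarrow> (nat \<times> nat) set \<Rightarrow> bool" where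
  "has_spanning_tree N E \<longleftrightarrow> (\<exists>r<N. \<forall>i<N. (r, i) \<in> E\<^sup>*)"

definition in_Gamma :: "nat \<Rightarrow> (nat \<times> nat) set \<Rightarrow> bool" where
  "in_Gamma N E \<longleftrightarrow> is_digraph N E \<and> has_spanning_tree N E"

definition row_stochastic_of :: "nat \<Rightarrow> (nat \<times> nat) set \<Rightarrow> real mat \<Rightarrow> bool" where
  "row_stochastic_of N E D \<longleftrightarrow>
     D \<in> carrier_mat N N \<and>
     (\<forall>i<N. D $$ (i,i) > 0) \<and>
     (\<forall>i<N. \<forall>j<N. j \<noteq> i \<longrightarrow>
        (if (j,i) \<in> E then D $$ (i,j) > 0 else D $$ (i,j) = 0)) \<and>
     (\<forall>i<N. (\<Sum>j<N. D $$ (i,j)) = 1)"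

definition vnorm :: "real vec \<Rightarrow> real" where
  "vnorm w = sqrt (\<Sum>r<dim_vec w. (w $ r)\<^sup>2)"

end

theory Submission
  imports Defs "Jordan_Normal_Form.Spectral_Radius" "Jordan_Normal_Form.Schur_Decomposition"
begin

(*
  Write e_i = v_i - x_i + h_i for the estimation error of agent i.  The protocol only feeds
  differences e_i - e_j back, so the relative errors w_i = e_(i+1) - e_0 satisfy the closed
  matrix recursion W(k+1) = A W(k) + L C W(k) (I - S), where S is the transpose of the
  "reduced" matrix of D describing disagreement with agent 0.  For row-stochastic D,
  char_poly D = (X - 1) char_poly (reduced D), so S has the eigenvalues lambda_2..lambda_N.
  Schur triangularisation of S turns the recursion into a triangular cascade whose diagonal
  blocks A + (1 - lambda_i) L C are Schur stable, hence W tends to 0.  Finally the formation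
  errors x_a - h_a - x_0 + h_0 follow the stable loop A + B K driven by B K (e_a - e_0),
  which tends to 0, so they vanish as well.
*)

lemma geometric_convolution_tendsto_zero:
  fixes a :: "nat \<Rightarrow> real" and r :: real
  assumes a0: "\<And>t. a t \<ge> 0" and lim: "a \<longlonglongrightarrow> 0" and r0: "0 \<le> r" and r1: "r < 1"
  shows "(\<lambda>k. \<Sum>t<k. r^(k-1-t) * a t) \<longlonglongrightarrow> 0"
proof -
  define s where "s k = (\<Sum>t<k. r^(k-1-t) * a t)" for k
  have s_Suc: "s (Suc k) = r * s k + a k" for k
  proof -
    have "s (Suc k) = (\<Sum>t<k. r^(k-t) * a t) + a k" unfolding s_def by simp
    also have "(\<Sum>t<k. r^(k-t) * a t) = (\<Sum>t<k. r * (r^(k-1-t) * a t))"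
    proof (rule sum.cong)
      fix t assume "t \<in> {..<k}"
      then have "k - t = Suc (k-1-t)" by auto
      then show "r^(k-t) * a t = r * (r^(k-1-t) * a t)" by simp
    qed simp
    finally show ?thesis unfolding s_def by (simp add: sum_distrib_left)
  qed
  have s_nonneg: "s k \<ge> 0" for k
    unfolding s_def by (intro sum_nonneg mult_nonneg_nonneg zero_le_power r0 a0)
  show ?thesis unfolding s_def[symmetric]
  proof (rule LIMSEQ_I)
    fix e :: real assume e: "0 < e"
    have "0 < e * (1 - r) / 2" using e r1 by simp
    from order_tendstoD(2)[OF lim this] obtain K where K: "\<And>k. k \<ge> K \<Longrightarrow> a k < e * (1 - r) / 2"
      unfolding eventually_sequentially by auto
    have tail: "s (K + j) \<le> r^j * s K + e / 2" for j
    proof (induction j)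
      case 0 thus ?case using e by simp
    next
      case (Suc j)
      have "s (K + Suc j) = r * s (K + j) + a (K + j)" using s_Suc by simp
      also have "\<dots> \<le> r * (r^j * s K + e/2) + e * (1 - r) / 2"
        using Suc K[of "K+j"] r0 by (intro add_mono mult_left_mono) auto
      also have "\<dots> = r^Suc j * s K + e/2" by (simp add: field_simps)
      finally show ?case .
    qed
    have "(\<lambda>j. r^j * s K) \<longlonglongrightarrow> 0"
      using tendsto_mult_left_zero[OF LIMSEQ_power_zero[of r], of "s K"] r0 r1 by auto
    from order_tendstoD(2)[OF this, of "e/2"] e
    obtain J where J: "\<And>j. j \<ge> J \<Longrightarrow> r^j * s K < e/2"
      unfolding eventually_sequentially by auto
    show "\<exists>no. \<forall>k\<ge>no. norm (s k - 0) < e"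
    proof (intro exI allI impI)
      fix k assume k: "k \<ge> K + J"
      then have "k = K + (k - K)" and "k - K \<ge> J" by auto
      with tail[of "k - K"] J[of "k - K"] s_nonneg[of k] show "norm (s k - 0) < e" by auto
    qed
  qed
qed

lemma index_mult_mat_vec_sum:
  assumes "A \<in> carrier_mat m n" and "w \<in> carrier_vec n" and "a < m"
  shows "(A *\<^sub>v w) $ a = (\<Sum>b<n. A $$ (a,b) * w $ b)"
  using assms by (auto simp: scalar_prod_def lessThan_atLeast0)

lemma index_mult_mat_sum:
  assumes "A \<in> carrier_mat a b" and "B \<in> carrier_mat b c" and "i < a" and "j < c"
  shows "(A * B) $$ (i,j) = (\<Sum>l<b. A $$ (i,l) * B $$ (l,j))"
  using assms by (auto simp: scalar_prod_def lessThan_atLeast0)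

lemma cmat_mult_of_real_index:
  fixes P :: "real mat" and Y :: "complex mat" and y :: "nat \<Rightarrow> real"
  assumes P: "P \<in> carrier_mat a b" and Y: "Y \<in> carrier_mat b c" and r: "r < a" and i: "i < c"
    and Y_real: "\<And>l. l < b \<Longrightarrow> Y $$ (l,i) = complex_of_real (y l)"
  shows "(cmat P * Y) $$ (r,i) = complex_of_real (\<Sum>l<b. P $$ (r,l) * y l)"
proof -
  have "(cmat P * Y) $$ (r,i) = (\<Sum>l<b. cmat P $$ (r,l) * Y $$ (l,i))"
    by (rule index_mult_mat_sum[OF _ Y r i]) (use P in \<open>simp add: cmat_def\<close>)
  also have "\<dots> = (\<Sum>l<b. complex_of_real (P $$ (r,l) * y l))"
    using P r Y_real by (intro sum.cong refl) (auto simp: cmat_def)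
  finally show ?thesis by simp
qed

lemma pow_mat_smult:
  assumes A: "(A :: 'a :: comm_ring_1 mat) \<in> carrier_mat n n"
  shows "(a \<cdot>\<^sub>m A) ^\<^sub>m k = a^k \<cdot>\<^sub>m (A ^\<^sub>m k)"
proof (induction k)
  case 0 show ?case using A by (intro eq_matI) auto
next
  case (Suc k)
  have Ak: "A ^\<^sub>m k \<in> carrier_mat n n" using A by auto
  have "(a \<cdot>\<^sub>m A) ^\<^sub>m Suc k = (a^k \<cdot>\<^sub>m (A ^\<^sub>m k)) * (a \<cdot>\<^sub>m A)" using Suc by simp
  also have "\<dots> = a^k \<cdot>\<^sub>m (a \<cdot>\<^sub>m (A ^\<^sub>m k * A))"
    using mult_smult_assoc_mat[OF Ak smult_carrier_mat[OF A], of "a^k"] mult_smult_distrib[OF Ak A, of a]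
    by simp
  also have "\<dots> = a^Suc k \<cdot>\<^sub>m (A ^\<^sub>m Suc k)" using A by (intro eq_matI) (auto simp: ac_simps)
  finally show ?case .
qed

lemma pow_mat_commute:
  assumes A: "(A :: 'a :: semiring_1 mat) \<in> carrier_mat n n"
  shows "A * A ^\<^sub>m k = A ^\<^sub>m k * A"
proof (induction k)
  case 0 show ?case using A by simp
next
  case (Suc k)
  have Ak: "A ^\<^sub>m k \<in> carrier_mat n n" using A by auto
  have "A * A ^\<^sub>m Suc k = (A * A ^\<^sub>m k) * A" using assoc_mult_mat[OF A Ak A] by simp
  also have "\<dots> = A ^\<^sub>m Suc k * A" using Suc by simp
  finally show ?case .
qed

text \<open>Scaling by \<open>1/r\<close> for some \<open>r\<close> above the spectral radius yields spectral radius below 1,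
  since every eigenvalue \<open>\<mu>\<close> of the scaled matrix gives the eigenvalue \<open>r \<mu>\<close> of \<open>M\<close>.\<close>

lemma spectral_radius_scaled_lt_1:
  fixes M :: "complex mat"
  assumes M: "M \<in> carrier_mat n n" and n: "0 < n" and r: "spectral_radius M < r"
  shows "spectral_radius (complex_of_real (1/r) \<cdot>\<^sub>m M) < 1"
proof -
  define M' where "M' = complex_of_real (1/r) \<cdot>\<^sub>m M"
  have M': "M' \<in> carrier_mat n n" using M by (auto simp: M'_def)
  from spectral_radius_mem_max(1)[OF M n] obtain \<mu>0 where "spectral_radius M = cmod \<mu>0"
    unfolding spectrum_def by auto
  then have r0: "0 < r" using r norm_ge_zero[of \<mu>0] by linarith
  from spectral_radius_mem_max(1)[OF M' n] obtain \<mu> where ev: "eigenvalue M' \<mu>"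
    and eq: "spectral_radius M' = cmod \<mu>" unfolding spectrum_def by auto
  from ev obtain w where "eigenvector M' w \<mu>" unfolding eigenvalue_def by auto
  hence w: "w \<in> carrier_vec n" "w \<noteq> 0\<^sub>v n" and ev: "M' *\<^sub>v w = \<mu> \<cdot>\<^sub>v w"
    using M' unfolding eigenvector_def by auto
  have "M *\<^sub>v w = (of_real r * \<mu>) \<cdot>\<^sub>v w"
  proof (rule eq_vecI)
    fix i assume "i < dim_vec ((of_real r * \<mu>) \<cdot>\<^sub>v w)"
    hence i: "i < n" using w by auto
    have "(M' *\<^sub>v w) $ i = \<mu> * w $ i" using ev i w by (metis index_smult_vec(1) carrier_vecD)
    moreover have "(M' *\<^sub>v w) $ i = (1/of_real r) * (M *\<^sub>v w) $ i" using i M w M'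
      by (simp add: index_mult_mat_vec_sum M'_def sum_distrib_left mult.assoc)
    ultimately show "(M *\<^sub>v w) $ i = ((of_real r * \<mu>) \<cdot>\<^sub>v w) $ i" using i w r0
      by (auto simp: field_simps)
  qed (use M w in auto)
  hence "eigenvalue M (of_real r * \<mu>)" using w M unfolding eigenvalue_def eigenvector_def by auto
  hence "cmod (of_real r * \<mu>) \<le> spectral_radius M"
    by (intro spectral_radius_mem_max(2)[OF M n]) (auto simp: spectrum_def)
  hence "cmod \<mu> \<le> spectral_radius M / r" using r0 by (simp add: norm_mult field_simps)
  also have "\<dots> < 1" using r r0 by simp
  finally show ?thesis using eq unfolding M'_def by simp
qed

text \<open>The powers of a Schur stable matrix decay exponentially, entrywise: the scaled matrix of
  the previous lemma has bounded powers.\<close>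

lemma schur_stable_power_decay:
  fixes M :: "complex mat"
  assumes M: "M \<in> carrier_mat n n" and st: "schur_stable M"
  shows "\<exists>c r. 0 \<le> c \<and> 0 < r \<and> r < 1 \<and>
     (\<forall>k i j. i < n \<longrightarrow> j < n \<longrightarrow> cmod ((M ^\<^sub>m k) $$ (i,j)) \<le> c * r^k)"
proof (cases "n = 0")
  case True thus ?thesis by (intro exI[of _ 0] exI[of _ "1/2"]) auto
next
  case False hence n: "n > 0" by auto
  define \<rho> where "\<rho> = spectral_radius M"
  from spectral_radius_mem_max(1)[OF M n] obtain \<mu> where "eigenvalue M \<mu>" "\<rho> = cmod \<mu>"
    unfolding spectrum_def \<rho>_def by auto
  hence "0 \<le> \<rho>" and "\<rho> < 1" using st unfolding schur_stable_def by auto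
  define r where "r = (1 + \<rho>)/2"
  have r: "0 < r" "r < 1" "\<rho> < r" using \<open>0 \<le> \<rho>\<close> \<open>\<rho> < 1\<close> by (auto simp: r_def)
  define M' where "M' = complex_of_real (1/r) \<cdot>\<^sub>m M"
  have M': "M' \<in> carrier_mat n n" using M by (auto simp: M'_def)
  from spectral_radius_jnf_norm_bound_less_1_upper_triangular[OF M']
    spectral_radius_scaled_lt_1[OF M n r(3)[unfolded \<rho>_def]]
  obtain c where c: "\<And>k. norm_bound (M' ^\<^sub>m k) c" unfolding M'_def by auto
  show ?thesis
  proof (intro exI conjI allI impI)
    have "\<forall>i j. i < n \<longrightarrow> j < n \<longrightarrow> cmod ((M' ^\<^sub>m 0) $$ (i,j)) \<le> c"
      using c[of 0] M' unfolding norm_bound_def by simp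
    hence "cmod ((M' ^\<^sub>m 0) $$ (0,0)) \<le> c" using n by blast
    thus "0 \<le> c" by (metis norm_ge_zero order_trans)
    show "0 < r" "r < 1" using r by auto
    fix k i j assume ij: "i < n" "j < n"
    have "cmod ((M' ^\<^sub>m k) $$ (i,j)) \<le> c" using c[of k] ij M' unfolding norm_bound_def by auto
    moreover have "(M' ^\<^sub>m k) $$ (i,j) = (complex_of_real (1/r))^k * (M ^\<^sub>m k) $$ (i,j)"
      using pow_mat_smult[OF M] ij M unfolding M'_def by simp
    ultimately have "(1/r)^k * cmod ((M ^\<^sub>m k) $$ (i,j)) \<le> c" using r
      by (simp add: norm_mult norm_power norm_divide)
    hence "r^k * ((1/r)^k * cmod ((M ^\<^sub>m k) $$ (i,j))) \<le> r^k * c" using r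
      by (intro mult_left_mono) auto
    thus "cmod ((M ^\<^sub>m k) $$ (i,j)) \<le> c * r^k" using r
      by (simp add: power_one_over field_simps)
  qed
qed

lemma linear_recursion_solution:
  fixes M :: "'a :: comm_ring_1 mat" and z w :: "nat \<Rightarrow> 'a vec"
  assumes M: "M \<in> carrier_mat n n" and z: "\<And>k. z k \<in> carrier_vec n" and w: "\<And>k. w k \<in> carrier_vec n"
    and rec: "\<And>k. z (Suc k) = M *\<^sub>v z k + w k" and a: "a < n"
  shows "z k $ a = (M ^\<^sub>m k *\<^sub>v z 0) $ a + (\<Sum>t<k. (M ^\<^sub>m (k-1-t) *\<^sub>v w t) $ a)"
  using a
proof (induction k arbitrary: a)
  case 0 show ?case using z[of 0] M 0 by simp
next
  case (Suc k)
  have Mp: "M ^\<^sub>m j \<in> carrier_mat n n" for j using M by auto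
  have pow_step: "(\<Sum>b<n. M $$ (a,b) * (M ^\<^sub>m j *\<^sub>v y) $ b) = (M ^\<^sub>m Suc j *\<^sub>v y) $ a"
    if y: "y \<in> carrier_vec n" for j y
  proof -
    have "(\<Sum>b<n. M $$ (a,b) * (M ^\<^sub>m j *\<^sub>v y) $ b) = (M *\<^sub>v (M ^\<^sub>m j *\<^sub>v y)) $ a"
      using index_mult_mat_vec_sum[OF M _ Suc.prems, of "M ^\<^sub>m j *\<^sub>v y"] Mp[of j] y by auto
    also have "\<dots> = ((M * M ^\<^sub>m j) *\<^sub>v y) $ a" using assoc_mult_mat_vec[OF M Mp y] by simp
    also have "\<dots> = (M ^\<^sub>m Suc j *\<^sub>v y) $ a" using pow_mat_commute[OF M] by simp
    finally show ?thesis .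
  qed
  have "z (Suc k) $ a = (\<Sum>b<n. M $$ (a,b) * z k $ b) + w k $ a"
    using rec[of k] Suc.prems M z[of k] w[of k] index_mult_mat_vec_sum[OF M z Suc.prems] by simp
  also have "(\<Sum>b<n. M $$ (a,b) * z k $ b)
      = (\<Sum>b<n. M $$ (a,b) * (M ^\<^sub>m k *\<^sub>v z 0) $ b)
        + (\<Sum>t<k. \<Sum>b<n. M $$ (a,b) * (M ^\<^sub>m (k-1-t) *\<^sub>v w t) $ b)"
    using Suc.IH by (simp add: distrib_left sum.distrib sum_distrib_left sum.swap[of _ "{..<k}"])
  also have "(\<Sum>t<k. \<Sum>b<n. M $$ (a,b) * (M ^\<^sub>m (k-1-t) *\<^sub>v w t) $ b)
      = (\<Sum>t<k. (M ^\<^sub>m (Suc k - 1 - t) *\<^sub>v w t) $ a)"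
  proof (rule sum.cong)
    fix t assume "t \<in> {..<k}"
    then have e: "Suc (k-1-t) = Suc k - 1 - t" by auto
    show "(\<Sum>b<n. M $$ (a,b) * (M ^\<^sub>m (k-1-t) *\<^sub>v w t) $ b) = (M ^\<^sub>m (Suc k - 1 - t) *\<^sub>v w t) $ a"
      unfolding e[symmetric] by (rule pow_step[OF w])
  qed simp
  also have "w k $ a = (M ^\<^sub>m (Suc k - 1 - k) *\<^sub>v w k) $ a" using w[of k] Suc.prems M by simp
  finally show ?case using pow_step[OF z[of 0], of k] by (simp add: add.assoc)
qed

text \<open>Input-to-state stability: a Schur stable system driven by a vanishing input converges to 0.
  By the variation-of-constants formula, the state is bounded by an exponentially decaying
  term plus a geometric convolution of the input.\<close>

lemma schur_stable_input_to_state: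
  fixes M :: "complex mat" and z w :: "nat \<Rightarrow> complex vec"
  assumes M: "M \<in> carrier_mat n n" and st: "schur_stable M"
    and z: "\<And>k. z k \<in> carrier_vec n" and w: "\<And>k. w k \<in> carrier_vec n"
    and rec: "\<And>k. z (Suc k) = M *\<^sub>v z k + w k"
    and w_lim: "\<And>b. b < n \<Longrightarrow> (\<lambda>k. w k $ b) \<longlonglongrightarrow> 0"
    and b: "b < n"
  shows "(\<lambda>k. z k $ b) \<longlonglongrightarrow> 0"
proof -
  from schur_stable_power_decay[OF M st] obtain c r where c: "0 \<le> c" and r: "0 < r" "r < 1"
    and decay: "\<And>k i j. i < n \<Longrightarrow> j < n \<Longrightarrow> cmod ((M ^\<^sub>m k) $$ (i,j)) \<le> c * r^k" by blast
  define l1 where "l1 y = (\<Sum>j<n. cmod (y $ j))" for y :: "complex vec"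
  have l1_lim: "(\<lambda>t. l1 (w t)) \<longlonglongrightarrow> 0" unfolding l1_def
    by (rule tendsto_null_sum) (use w_lim in \<open>auto intro: tendsto_norm_zero\<close>)
  have pow_bound: "cmod ((M ^\<^sub>m j *\<^sub>v y) $ b) \<le> c * r^j * l1 y" if y: "y \<in> carrier_vec n" for j y
  proof -
    have "cmod ((M ^\<^sub>m j *\<^sub>v y) $ b) = cmod (\<Sum>i<n. (M ^\<^sub>m j) $$ (b,i) * y $ i)"
      using index_mult_mat_vec_sum[OF _ y b] M by simp
    also have "\<dots> \<le> (\<Sum>i<n. cmod ((M ^\<^sub>m j) $$ (b,i) * y $ i))" by (rule norm_sum)
    also have "\<dots> \<le> (\<Sum>i<n. c * r^j * cmod (y $ i))"
      using decay[OF b] by (intro sum_mono) (auto simp: norm_mult intro: mult_right_mono)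
    finally show ?thesis by (simp add: l1_def sum_distrib_left)
  qed
  define bound where "bound k = c * r^k * l1 (z 0) + c * (\<Sum>t<k. r^(k-1-t) * l1 (w t))" for k
  have z_bound: "cmod (z k $ b) \<le> bound k" for k
  proof -
    have "cmod (z k $ b) \<le> cmod ((M ^\<^sub>m k *\<^sub>v z 0) $ b) + (\<Sum>t<k. cmod ((M ^\<^sub>m (k-1-t) *\<^sub>v w t) $ b))"
      unfolding linear_recursion_solution[of M n z w, OF M z w rec b, of k]
      by (rule order_trans[OF norm_triangle_ineq add_left_mono[OF norm_sum]])
    also have "\<dots> \<le> c * r^k * l1 (z 0) + (\<Sum>t<k. c * r^(k-1-t) * l1 (w t))"
      by (intro add_mono sum_mono pow_bound z w)
    finally show ?thesis by (simp add: bound_def sum_distrib_left mult.assoc)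
  qed
  have "bound \<longlonglongrightarrow> 0 + c * 0" unfolding bound_def
  proof (intro tendsto_add tendsto_mult_left)
    show "(\<lambda>k. c * r^k * l1 (z 0)) \<longlonglongrightarrow> 0"
      using tendsto_mult_left[OF tendsto_mult_right[OF LIMSEQ_power_zero[of r], of "l1 (z 0)"], of c] r
      by (simp add: mult.assoc)
    show "(\<lambda>k. \<Sum>t<k. r^(k-1-t) * l1 (w t)) \<longlonglongrightarrow> 0"
      by (rule geometric_convolution_tendsto_zero[OF _ l1_lim]) (use r in \<open>simp_all add: l1_def sum_nonneg\<close>)
  qed
  then have "bound \<longlonglongrightarrow> 0" by simp
  then show ?thesis
  proof (rule tendsto_0_le[of bound _ _ 1], intro always_eventually allI)
    fix k show "norm (z k $ b) \<le> norm (bound k) * 1"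
      using order_trans[OF z_bound[of k] abs_ge_self] by simp
  qed
qed

lemma schur_stable_input_to_state_real:
  fixes M :: "real mat" and z w :: "nat \<Rightarrow> nat \<Rightarrow> real"
  assumes M: "M \<in> carrier_mat n n" and st: "schur_stable (cmat M)"
    and rec: "\<And>k r. r < n \<Longrightarrow> z (Suc k) r = (\<Sum>c<n. M $$ (r,c) * z k c) + w k r"
    and w_lim: "\<And>r. r < n \<Longrightarrow> (\<lambda>k. w k r) \<longlonglongrightarrow> 0" and r: "r < n"
  shows "(\<lambda>k. z k r) \<longlonglongrightarrow> 0"
proof -
  define zc where "zc k = vec n (\<lambda>r. complex_of_real (z k r))" for k
  define wc where "wc k = vec n (\<lambda>r. complex_of_real (w k r))" for k
  have Mc: "cmat M \<in> carrier_mat n n" using M by (simp add: cmat_def)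
  have rec_c: "zc (Suc k) = cmat M *\<^sub>v zc k + wc k" for k
  proof (rule eq_vecI)
    fix r assume "r < dim_vec (cmat M *\<^sub>v zc k + wc k)"
    hence r: "r < n" by (simp add: wc_def)
    have "(cmat M *\<^sub>v zc k) $ r = (\<Sum>c<n. cmat M $$ (r,c) * zc k $ c)"
      by (rule index_mult_mat_vec_sum[OF Mc _ r]) (simp add: zc_def)
    also have "\<dots> = complex_of_real (\<Sum>c<n. M $$ (r,c) * z k c)"
      using M r by (simp add: cmat_def zc_def)
    finally show "zc (Suc k) $ r = (cmat M *\<^sub>v zc k + wc k) $ r"
      using r rec[OF r] by (simp add: zc_def wc_def)
  qed (simp add: zc_def wc_def)
  have "(\<lambda>k. wc k $ r') \<longlonglongrightarrow> 0" if "r' < n" for r'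
    using tendsto_of_real[OF w_lim[OF that], where 'a=complex] that by (simp add: wc_def)
  from schur_stable_input_to_state[OF Mc st _ _ rec_c this r]
  have "(\<lambda>k. complex_of_real (z k r)) \<longlonglongrightarrow> complex_of_real 0" using r by (simp add: zc_def wc_def)
  then show ?thesis by (simp only: tendsto_of_real_iff)
qed

lemma cascade_column_entry:
  fixes F G Z U :: "'a :: comm_ring_1 mat"
  assumes F: "F \<in> carrier_mat n n" and G: "G \<in> carrier_mat n n"
    and Z: "Z \<in> carrier_mat n m" and U: "U \<in> carrier_mat m m" and r: "r < n" and i: "i < m"
  shows "(F * Z + G * (Z * U)) $$ (r,i) = ((F + U $$ (i,i) \<cdot>\<^sub>m G) *\<^sub>v col Z i) $ r
     + (\<Sum>c<n. G $$ (r,c) * (\<Sum>j\<in>{..<m} - {i}. Z $$ (c,j) * U $$ (j,i)))"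
proof -
  have ZU: "Z * U \<in> carrier_mat n m" using Z U by simp
  have split_col: "(Z * U) $$ (c,i) = U $$ (i,i) * Z $$ (c,i) + (\<Sum>j\<in>{..<m} - {i}. Z $$ (c,j) * U $$ (j,i))"
    if c: "c < n" for c
    using index_mult_mat_sum[OF Z U c i] sum.remove[of "{..<m}" i] i by (simp add: mult.commute)
  have diag_part: "((F + U $$ (i,i) \<cdot>\<^sub>m G) *\<^sub>v col Z i) $ r
      = (\<Sum>c<n. F $$ (r,c) * Z $$ (c,i)) + (\<Sum>c<n. G $$ (r,c) * (U $$ (i,i) * Z $$ (c,i)))"
  proof -
    have "((F + U $$ (i,i) \<cdot>\<^sub>m G) *\<^sub>v col Z i) $ r = (\<Sum>c<n. (F + U $$ (i,i) \<cdot>\<^sub>m G) $$ (r,c) * col Z i $ c)"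
      by (rule index_mult_mat_vec_sum[OF _ _ r]) (use F G Z i in auto)
    also have "\<dots> = (\<Sum>c<n. F $$ (r,c) * Z $$ (c,i) + G $$ (r,c) * (U $$ (i,i) * Z $$ (c,i)))"
      by (intro sum.cong refl) (use F G Z r i in \<open>auto simp: algebra_simps\<close>)
    finally show ?thesis by (simp add: sum.distrib)
  qed
  have "(F * Z + G * (Z * U)) $$ (r,i) = (F * Z) $$ (r,i) + (G * (Z * U)) $$ (r,i)"
    using F G Z U r i by simp
  also have "\<dots> = (\<Sum>c<n. F $$ (r,c) * Z $$ (c,i)) + (\<Sum>c<n. G $$ (r,c) * (Z * U) $$ (c,i))"
    using index_mult_mat_sum[OF F Z r i] index_mult_mat_sum[OF G ZU r i] by simp
  also have "(\<Sum>c<n. G $$ (r,c) * (Z * U) $$ (c,i)) = (\<Sum>c<n. G $$ (r,c) * (U $$ (i,i) * Z $$ (c,i)))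
      + (\<Sum>c<n. G $$ (r,c) * (\<Sum>j\<in>{..<m} - {i}. Z $$ (c,j) * U $$ (j,i)))"
    by (simp add: split_col distrib_left sum.distrib)
  finally show ?thesis unfolding diag_part by (simp add: add.assoc)
qed

text \<open>Triangular cascades: if \<open>Z(k+1) = F Z(k) + G Z(k) U\<close> with \<open>U\<close> upper triangular, then
  column \<open>i\<close> of \<open>Z\<close> is driven by the stable matrix \<open>F + U\<^sub>i\<^sub>i G\<close> and an input built from the
  columns \<open>j < i\<close>; by induction over the columns, everything tends to 0.\<close>

lemma upper_triangular_cascade_tendsto_zero:
  fixes F G U :: "complex mat" and Z :: "nat \<Rightarrow> complex mat"
  assumes F: "F \<in> carrier_mat n n" and G: "G \<in> carrier_mat n n" and U: "U \<in> carrier_mat m m"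
    and Z: "\<And>k. Z k \<in> carrier_mat n m"
    and rec: "\<And>k. Z (Suc k) = F * Z k + G * (Z k * U)"
    and ut: "upper_triangular U"
    and st: "\<And>i. i < m \<Longrightarrow> schur_stable (F + U $$ (i,i) \<cdot>\<^sub>m G)"
    and i: "i < m" and c: "c < n"
  shows "(\<lambda>k. Z k $$ (c,i)) \<longlonglongrightarrow> 0"
  using i c
proof (induction i arbitrary: c rule: less_induct)
  case (less i)
  define M where "M = F + U $$ (i,i) \<cdot>\<^sub>m G"
  define zi where "zi k = col (Z k) i" for k
  define input where "input k = vec n (\<lambda>r. \<Sum>c<n. G $$ (r,c) * (\<Sum>j\<in>{..<m} - {i}. Z k $$ (c,j) * U $$ (j,i)))" for k
  have M: "M \<in> carrier_mat n n" unfolding M_def using F G by simp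
  have zi: "zi k \<in> carrier_vec n" for k unfolding zi_def using Z[of k] by (intro carrier_vecI) simp
  have zi_rec: "zi (Suc k) = M *\<^sub>v zi k + input k" for k
  proof (rule eq_vecI)
    fix r assume "r < dim_vec (M *\<^sub>v zi k + input k)"
    hence r: "r < n" by (simp add: input_def)
    have "zi (Suc k) $ r = Z (Suc k) $$ (r,i)" using Z[of "Suc k"] r less.prems(1) unfolding zi_def by simp
    then show "zi (Suc k) $ r = (M *\<^sub>v zi k + input k) $ r"
      using cascade_column_entry[OF F G Z U r less.prems(1)] r less.prems(1) Z[of "Suc k"] M
      unfolding zi_def M_def input_def rec by simp
  qed (use Z[of "Suc k"] M in \<open>simp add: zi_def input_def\<close>)
  have input_lim: "(\<lambda>k. input k $ r) \<longlonglongrightarrow> 0" if r: "r < n" for r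
  proof -
    have "(\<lambda>k. Z k $$ (c',j) * U $$ (j,i)) \<longlonglongrightarrow> 0" if j: "j \<in> {..<m} - {i}" and c': "c' < n" for j c'
    proof (cases "j < i")
      case True
      then show ?thesis using less.IH[OF True _ c'] less.prems(1) by (auto intro: tendsto_mult_left_zero)
    next
      case False
      then have "U $$ (j,i) = 0" using ut U j unfolding upper_triangular_def by auto
      then show ?thesis by simp
    qed
    then show ?thesis unfolding input_def using r
      by (auto intro!: tendsto_null_sum tendsto_mult_right_zero)
  qed
  have "(\<lambda>k. zi k $ c) \<longlonglongrightarrow> 0"
    using schur_stable_input_to_state[OF M _ zi _ zi_rec input_lim less.prems(2)] st[OF less.prems(1)]
    unfolding M_def input_def by simp
  moreover have "zi k $ c = Z k $$ (c,i)" for k using Z[of k] less.prems unfolding zi_def by simp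
  ultimately show ?case by simp
qed

lemma mat_seq_mult_right_tendsto_zero:
  fixes Z :: "nat \<Rightarrow> complex mat" and X :: "complex mat"
  assumes Z: "\<And>k. Z k \<in> carrier_mat n m" and X: "X \<in> carrier_mat m l"
    and lim: "\<And>c j. c < n \<Longrightarrow> j < m \<Longrightarrow> (\<lambda>k. Z k $$ (c,j)) \<longlonglongrightarrow> 0"
    and c: "c < n" and i: "i < l"
  shows "(\<lambda>k. (Z k * X) $$ (c,i)) \<longlonglongrightarrow> 0"
  unfolding index_mult_mat_sum[OF Z X c i]
  by (intro tendsto_null_sum tendsto_mult_left_zero) (auto intro: lim c)

lemma cascade_change_of_basis:
  fixes F G P T Q W W' :: "'a :: comm_ring_1 mat"
  assumes F: "F \<in> carrier_mat n n" and G: "G \<in> carrier_mat n n" and W: "W \<in> carrier_mat n m"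
    and P: "P \<in> carrier_mat m m" and T: "T \<in> carrier_mat m m" and Q: "Q \<in> carrier_mat m m"
    and QP: "Q * P = 1\<^sub>m m"
    and rec: "W' = F * W + G * (W * (1\<^sub>m m - P * T * Q))"
  shows "W' * P = F * (W * P) + G * ((W * P) * (1\<^sub>m m - T))"
proof -
  have PTQ: "P * T * Q \<in> carrier_mat m m" using P T Q by simp
  have IS: "1\<^sub>m m - P * T * Q \<in> carrier_mat m m" and IT: "1\<^sub>m m - T \<in> carrier_mat m m"
    using P T Q by auto
  have WS: "W * (1\<^sub>m m - P * T * Q) \<in> carrier_mat n m" using W IS by simp
  have "P * T * Q * P = P * T"
    using assoc_mult_mat[OF mult_carrier_mat[OF P T] Q P] QP P T by simp
  then have shift: "(1\<^sub>m m - P * T * Q) * P = P * (1\<^sub>m m - T)"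
    using minus_mult_distrib_mat[OF one_carrier_mat PTQ P] mult_minus_distrib_mat[OF P one_carrier_mat T] P
    by simp
  have "W' * P = F * W * P + G * (W * (1\<^sub>m m - P * T * Q)) * P"
    unfolding rec by (rule add_mult_distrib_mat[OF mult_carrier_mat[OF F W] mult_carrier_mat[OF G WS] P])
  also have "F * W * P = F * (W * P)" using assoc_mult_mat[OF F W P] .
  also have "G * (W * (1\<^sub>m m - P * T * Q)) * P = G * (W * ((1\<^sub>m m - P * T * Q) * P))"
    using assoc_mult_mat[OF G WS P] assoc_mult_mat[OF W IS P] by simp
  also have "\<dots> = G * ((W * P) * (1\<^sub>m m - T))"
    unfolding shift using assoc_mult_mat[OF W P IT] by simp
  finally show ?thesis .
qed

text \<open>Schur triangularisation reduces \<open>W(k+1) = F W(k) + G W(k) (I - S)\<close> to a triangular cascade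
  whose diagonal blocks are \<open>F + (1 - \<mu>) G\<close> for the eigenvalues \<open>\<mu>\<close> of \<open>S\<close>.\<close>

lemma consensus_cascade_tendsto_zero:
  fixes F G S :: "complex mat" and W :: "nat \<Rightarrow> complex mat" and mus :: "complex list"
  assumes F: "F \<in> carrier_mat n n" and G: "G \<in> carrier_mat n n" and S: "S \<in> carrier_mat m m"
    and W: "\<And>k. W k \<in> carrier_mat n m"
    and rec: "\<And>k. W (Suc k) = F * W k + G * (W k * (1\<^sub>m m - S))"
    and cp: "char_poly S = (\<Prod>\<mu>\<leftarrow>mus. [:- \<mu>, 1:])"
    and st: "\<And>\<mu>. \<mu> \<in> set mus \<Longrightarrow> schur_stable (F + (1 - \<mu>) \<cdot>\<^sub>m G)"
    and c: "c < n" and i: "i < m"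
  shows "(\<lambda>k. W k $$ (c,i)) \<longlonglongrightarrow> 0"
proof -
  obtain T P Q where "schur_decomposition S mus = (T,P,Q)" by (cases "schur_decomposition S mus") auto
  from schur_decomposition[OF S cp this]
  have sim: "similar_mat_wit S T P Q" and ut: "upper_triangular T" and dg: "diag_mat T = mus" by auto
  then have T: "T \<in> carrier_mat m m" and P: "P \<in> carrier_mat m m" and Q: "Q \<in> carrier_mat m m"
    and PQ: "P * Q = 1\<^sub>m m" and QP: "Q * P = 1\<^sub>m m" and S_eq: "S = P * T * Q"
    using S unfolding similar_mat_wit_def Let_def by auto
  define Z where "Z k = W k * P" for k
  have Z: "Z k \<in> carrier_mat n m" for k unfolding Z_def by (rule mult_carrier_mat[OF W P])
  have Z_rec: "Z (Suc k) = F * Z k + G * (Z k * (1\<^sub>m m - T))" for k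
    unfolding Z_def by (rule cascade_change_of_basis[OF F G W P T Q QP rec[unfolded S_eq]])
  have U: "1\<^sub>m m - T \<in> carrier_mat m m" and U_ut: "upper_triangular (1\<^sub>m m - T)"
    using ut T unfolding upper_triangular_def by auto
  have len: "length mus = m" using dg T unfolding diag_mat_def by auto
  have U_diag: "(1\<^sub>m m - T) $$ (j,j) = 1 - mus ! j" if j: "j < m" for j
    using j T unfolding dg[symmetric] diag_mat_def by simp
  have U_st: "schur_stable (F + (1\<^sub>m m - T) $$ (j,j) \<cdot>\<^sub>m G)" if "j < m" for j
    unfolding U_diag[OF that] using st[OF nth_mem] that len by simp
  have Z_lim: "(\<lambda>k. Z k $$ (c',j)) \<longlonglongrightarrow> 0" if "c' < n" "j < m" for c' j
    by (rule upper_triangular_cascade_tendsto_zero[of F n G "1\<^sub>m m - T" m Z, OF F G U Z Z_rec U_ut U_st that(2,1)])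
  have "W k = Z k * Q" for k
    unfolding Z_def using W[of k] P Q PQ by (simp add: assoc_mult_mat[of _ n m _ m])
  then show ?thesis using mat_seq_mult_right_tendsto_zero[OF Z Q Z_lim c i] by simp
qed

text \<open>The reduced matrix of \<open>M\<close>: the dynamics of the differences \<open>y\<^sub>i\<^sub>+\<^sub>1 - y\<^sub>0\<close> under \<open>y \<mapsto> M y\<close>
  when \<open>M\<close> has unit row sums.\<close>

definition reduced_mat :: "'a :: ab_group_add mat \<Rightarrow> 'a mat" where
  "reduced_mat M = mat (dim_row M - 1) (dim_row M - 1) (\<lambda>(i,j). M $$ (Suc i, Suc j) - M $$ (0, Suc j))"

text \<open>The change of coordinates behind the reduction: \<open>root_diff_mat\<close> subtracts row \<open>0\<close> from all other
  rows, and its inverse \<open>row_sum_mat\<close> replaces column \<open>0\<close> by the row sums.\<close>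

definition root_diff_mat :: "nat \<Rightarrow> 'a :: comm_ring_1 mat" where
  "root_diff_mat N = mat N N (\<lambda>(i,l). if i = 0 then (if l = 0 then 1 else 0)
     else (if l = i then 1 else 0) - (if l = 0 then 1 else 0))"

definition row_sum_mat :: "nat \<Rightarrow> 'a :: comm_ring_1 mat" where
  "row_sum_mat N = mat N N (\<lambda>(l,j). if j = 0 then 1 else (if l = j then 1 else 0))"

lemma root_diff_mat_mult_index:
  fixes Y :: "'a :: comm_ring_1 mat"
  assumes Y: "Y \<in> carrier_mat N N" and i: "i < N" and j: "j < N"
  shows "(root_diff_mat N * Y) $$ (i,j) = (if i = 0 then Y $$ (0,j) else Y $$ (i,j) - Y $$ (0,j))"
proof -
  have "(root_diff_mat N * Y) $$ (i,j) = (\<Sum>l<N. root_diff_mat N $$ (i,l) * Y $$ (l,j))"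
    by (rule index_mult_mat_sum[OF _ Y i j]) (simp add: root_diff_mat_def)
  also have "\<dots> = (\<Sum>l<N. (if i = 0 then (if l = 0 then Y $$ (l,j) else 0)
      else (if l = i then Y $$ (l,j) else 0) - (if l = 0 then Y $$ (l,j) else 0)))"
    using i by (intro sum.cong refl) (auto simp: root_diff_mat_def)
  also have "\<dots> = (if i = 0 then Y $$ (0,j) else Y $$ (i,j) - Y $$ (0,j))"
    using i by (cases "i = 0") (simp_all add: sum_subtractf)
  finally show ?thesis .
qed

lemma mult_row_sum_mat_index:
  fixes Y :: "'a :: comm_ring_1 mat"
  assumes Y: "Y \<in> carrier_mat N N" and i: "i < N" and j: "j < N"
  shows "(Y * row_sum_mat N) $$ (i,j) = (if j = 0 then (\<Sum>l<N. Y $$ (i,l)) else Y $$ (i,j))"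
proof -
  have "(Y * row_sum_mat N) $$ (i,j) = (\<Sum>l<N. Y $$ (i,l) * row_sum_mat N $$ (l,j))"
    by (rule index_mult_mat_sum[OF Y _ i j]) (simp add: row_sum_mat_def)
  also have "\<dots> = (\<Sum>l<N. if j = 0 then Y $$ (i,l) else (if l = j then Y $$ (i,l) else 0))"
    using j by (intro sum.cong refl) (auto simp: row_sum_mat_def)
  also have "\<dots> = (if j = 0 then (\<Sum>l<N. Y $$ (i,l)) else Y $$ (i,j))"
    using j by (cases "j = 0") simp_all
  finally show ?thesis .
qed

lemma unit_row_sum_block_similar:
  fixes M :: "'a :: field mat"
  assumes M: "M \<in> carrier_mat (Suc m) (Suc m)"
    and row_sum: "\<And>i. i < Suc m \<Longrightarrow> (\<Sum>j<Suc m. M $$ (i,j)) = 1"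
  shows "similar_mat M (four_block_mat (1\<^sub>m 1) (mat 1 m (\<lambda>(i,j). M $$ (0, Suc j))) (0\<^sub>m m 1) (reduced_mat M))"
    (is "similar_mat M ?B")
proof -
  define N where "N = Suc m"
  define S :: "'a mat" where "S = row_sum_mat N"
  define T :: "'a mat" where "T = root_diff_mat N"
  have N: "0 < N" unfolding N_def by simp
  have M': "M \<in> carrier_mat N N" using M N_def by simp
  have S: "S \<in> carrier_mat N N" and T: "T \<in> carrier_mat N N"
    unfolding S_def T_def row_sum_mat_def root_diff_mat_def by auto
  have TS: "T * S = 1\<^sub>m N"
  proof (rule eq_matI)
    fix i j assume "i < dim_row (1\<^sub>m N)" "j < dim_col (1\<^sub>m N)"
    hence ij: "i < N" "j < N" by auto
    show "(T * S) $$ (i,j) = 1\<^sub>m N $$ (i,j)"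
      unfolding T_def root_diff_mat_mult_index[OF S ij] using ij N unfolding S_def row_sum_mat_def by auto
  qed (use T S in auto)
  have ST: "S * T = 1\<^sub>m N" by (rule mat_mult_left_right_inverse[OF T S TS])
  have MS: "M * S \<in> carrier_mat N N" using M' S by auto
  have B_index: "(T * (M * S)) $$ (i,j) = (if i = 0 then (if j = 0 then 1 else M $$ (0,j))
      else (if j = 0 then 0 else M $$ (i,j) - M $$ (0,j)))" if ij: "i < N" "j < N" for i j
  proof -
    have MS_index: "(M * S) $$ (a,j) = (if j = 0 then 1 else M $$ (a,j))" if a: "a < N" for a
      using mult_row_sum_mat_index[OF M' a ij(2)] row_sum[of a] a unfolding S_def N_def by simp
    show ?thesis
      using root_diff_mat_mult_index[OF MS ij] MS_index[OF ij(1)] MS_index[OF N] unfolding T_def by simp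
  qed
  have B: "T * (M * S) = ?B"
  proof (rule eq_matI)
    fix i j assume ij: "i < dim_row ?B" "j < dim_col ?B"
    hence ij': "i < N" "j < N" unfolding N_def reduced_mat_def using M by auto
    show "(T * (M * S)) $$ (i,j) = ?B $$ (i,j)"
      using B_index[OF ij'] ij ij' M unfolding N_def reduced_mat_def by (cases i; cases j) auto
  qed (use T MS M in \<open>auto simp: N_def reduced_mat_def\<close>)
  show ?thesis
  proof (rule similar_matI[of _ _ S T N])
    show "{M, ?B, S, T} \<subseteq> carrier_mat N N" using M' S T MS unfolding B[symmetric] by auto
    show "S * T = 1\<^sub>m N" by (rule ST)
    show "T * S = 1\<^sub>m N" by (rule TS)
    have "S * ?B * T = (S * T) * (M * S) * T" unfolding B[symmetric] using S T MS by (simp add: assoc_mult_mat[OF S T MS])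
    also have "\<dots> = M * (S * T)" using M' S T by (simp add: ST)
    finally show "M = S * ?B * T" using ST M' by simp
  qed
qed

lemma char_poly_reduced_mat:
  fixes M :: "complex mat"
  assumes M: "M \<in> carrier_mat (Suc m) (Suc m)"
    and row_sum: "\<And>i. i < Suc m \<Longrightarrow> (\<Sum>j<Suc m. M $$ (i,j)) = 1"
  shows "char_poly M = [:-1,1:] * char_poly (reduced_mat M)"
proof -
  have R: "reduced_mat M \<in> carrier_mat m m" using M unfolding reduced_mat_def by auto
  have one: "char_poly (1\<^sub>m 1 :: complex mat) = [:-1,1:]"
    by (subst char_poly_upper_triangular[of _ 1]) (auto simp: upper_triangular_def diag_mat_def)
  have "char_poly M = char_poly (four_block_mat (1\<^sub>m 1) (mat 1 m (\<lambda>(i,j). M $$ (0, Suc j))) (0\<^sub>m m 1) (reduced_mat M))"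
    by (rule char_poly_similar[OF unit_row_sum_block_similar[OF M row_sum]])
  also have "\<dots> = char_poly (1\<^sub>m 1 :: complex mat) * char_poly (reduced_mat M)"
  proof (rule char_poly_0_block[OF refl])
    show "\<exists>es. char_poly (1\<^sub>m 1 :: complex mat) = (\<Prod>a\<leftarrow>es. [:- a, 1:])"
      using one by (intro exI[of _ "[1]"]) simp
    show "\<exists>es. char_poly (reduced_mat M) = (\<Prod>a\<leftarrow>es. [:- a, 1:])" using char_poly_factorized[OF R] by blast
  qed (use R in auto)
  finally show ?thesis unfolding one .
qed

text \<open>The disagreement of agent \<open>i+1\<close> with its neighbours minus that of agent \<open>0\<close>, rewritten in
  the relative coordinates \<open>g(l+1) - g 0\<close>: this is where \<open>I - reduced_mat D\<close> enters.\<close>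

lemma stochastic_disagreement_identity:
  fixes D :: "real mat" and g :: "nat \<Rightarrow> real"
  assumes row_sum: "\<And>i. i < Suc m \<Longrightarrow> (\<Sum>j<Suc m. D $$ (i,j)) = 1" and i: "i < m"
  shows "(\<Sum>j<Suc m. D $$ (Suc i,j) * (g (Suc i) - g j)) - (\<Sum>j<Suc m. D $$ (0,j) * (g 0 - g j))
    = (\<Sum>l<m. ((if i = l then 1 else 0) - D $$ (Suc i, Suc l) + D $$ (0, Suc l)) * (g (Suc l) - g 0))"
proof -
  define t where "t a = (\<Sum>l<m. D $$ (a, Suc l) * g (Suc l))" for a
  have tail_sum: "(\<Sum>l<m. D $$ (a, Suc l)) = 1 - D $$ (a,0)" if a: "a < Suc m" for a
    using row_sum[OF a] unfolding sum.lessThan_Suc_shift by (simp add: algebra_simps)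
  have disagreement: "(\<Sum>j<Suc m. D $$ (a,j) * (g a - g j)) = g a - D $$ (a,0) * g 0 - t a"
    if a: "a < Suc m" for a
  proof -
    have "(\<Sum>j<Suc m. D $$ (a,j) * (g a - g j)) = g a * (\<Sum>j<Suc m. D $$ (a,j)) - (\<Sum>j<Suc m. D $$ (a,j) * g j)"
      by (simp add: sum_distrib_left sum_subtractf[symmetric] algebra_simps del: sum.lessThan_Suc)
    also have "(\<Sum>j<Suc m. D $$ (a,j) * g j) = D $$ (a,0) * g 0 + t a"
      unfolding t_def sum.lessThan_Suc_shift by simp
    finally show ?thesis using row_sum[OF a] by simp
  qed
  have relative: "(\<Sum>l<m. D $$ (a, Suc l) * (g (Suc l) - g 0)) = t a - g 0 * (1 - D $$ (a,0))"
    if a: "a < Suc m" for a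
    unfolding t_def tail_sum[OF a, symmetric]
    by (simp add: sum_distrib_left sum_subtractf[symmetric] algebra_simps)
  have "(\<Sum>l<m. ((if i = l then 1 else 0) - D $$ (Suc i, Suc l) + D $$ (0, Suc l)) * (g (Suc l) - g 0))
      = (\<Sum>l<m. (if i = l then 1 else 0) * (g (Suc l) - g 0)) - (\<Sum>l<m. D $$ (Suc i, Suc l) * (g (Suc l) - g 0))
        + (\<Sum>l<m. D $$ (0, Suc l) * (g (Suc l) - g 0))"
    by (simp only: sum.distrib[symmetric] sum_subtractf[symmetric] algebra_simps)
  also have "(\<Sum>l<m. (if i = l then 1 else 0) * (g (Suc l) - g 0)) = g (Suc i) - g 0"
    by (subst sum.cong[OF refl, of _ _ "\<lambda>l. if i = l then g (Suc l) - g 0 else 0"]) (use i in auto)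
  finally show ?thesis using disagreement[of "Suc i"] disagreement[of 0] relative[of "Suc i"] relative[of 0] i
    by (simp add: algebra_simps)
qed

text \<open>The closed loop of the formation protocol, for a weight matrix \<open>D\<close> with unit row sums
  (the graph structure of \<open>D\<close> enters only through the spectral hypothesis on \<open>D\<close>).\<close>

locale formation_protocol =
  fixes N n p q :: nat
    and D A B C K L :: "real mat"
    and h :: "nat \<Rightarrow> real vec"
    and x v u :: "nat \<Rightarrow> nat \<Rightarrow> real vec"
  assumes N_pos: "0 < N"
    and D_carrier: "D \<in> carrier_mat N N"
    and D_row_sum: "\<And>i. i < N \<Longrightarrow> (\<Sum>j<N. D $$ (i,j)) = 1"
    and dimA: "A \<in> carrier_mat n n" and dimB: "B \<in> carrier_mat n p"
    and dimC: "C \<in> carrier_mat q n" and dimK: "K \<in> carrier_mat p n"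
    and dimL: "L \<in> carrier_mat n q"
    and dimh: "\<And>i. i < N \<Longrightarrow> h i \<in> carrier_vec n"
    and hcond: "\<And>i j. i < N \<Longrightarrow> j < N \<Longrightarrow> (A - 1\<^sub>m n) *\<^sub>v (h i - h j) = 0\<^sub>v n"
    and x0: "\<And>i. i < N \<Longrightarrow> x i 0 \<in> carrier_vec n"
    and v0: "\<And>i. i < N \<Longrightarrow> v i 0 \<in> carrier_vec n"
    and ctrl: "\<And>i k. i < N \<Longrightarrow> u i k = K *\<^sub>v v i k"
    and xdyn: "\<And>i k. i < N \<Longrightarrow> x i (Suc k) = A *\<^sub>v x i k + B *\<^sub>v u i k"
    and vdyn: "\<And>i k. i < N \<Longrightarrow> v i (Suc k) =
        (A + B * K) *\<^sub>v v i k
        + L *\<^sub>v (finsum_vec TYPE(real) q (\<lambda>j. D $$ (i,j) \<cdot>\<^sub>v (C *\<^sub>v (v i k - v j k))) {..<N}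
                 - finsum_vec TYPE(real) q
                     (\<lambda>j. D $$ (i,j) \<cdot>\<^sub>v (C *\<^sub>v x i k - C *\<^sub>v x j k - C *\<^sub>v (h i - h j))) {..<N})"
begin

lemma x_carrier: "i < N \<Longrightarrow> x i k \<in> carrier_vec n"
proof (cases k)
  case (Suc k')
  assume i: "i < N"
  have "dim_vec (x i k) = dim_row B" unfolding Suc by (simp only: xdyn[OF i] index_add_vec(2) dim_mult_mat_vec)
  then show ?thesis using dimB by (intro carrier_vecI) simp
qed (use x0 in simp)

lemma v_carrier: "i < N \<Longrightarrow> v i k \<in> carrier_vec n"
proof (cases k)
  case (Suc k')
  assume i: "i < N"
  have "dim_vec (v i k) = dim_row L" unfolding Suc by (simp only: vdyn[OF i] index_add_vec(2) dim_mult_mat_vec)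
  then show ?thesis using dimL by (intro carrier_vecI) simp
qed (use v0 in simp)

lemmas BK_carrier = mult_carrier_mat[OF dimB dimK]

lemma offset_drift_uniform:
  assumes a: "a < N" and b: "b < N" and r: "r < n"
  shows "(\<Sum>c<n. A $$ (r,c) * h a $ c) - h a $ r = (\<Sum>c<n. A $$ (r,c) * h b $ c) - h b $ r"
proof -
  have hab: "h a - h b \<in> carrier_vec n" using dimh[OF b] by (intro carrier_vecI) simp
  have "0 = ((A - 1\<^sub>m n) *\<^sub>v (h a - h b)) $ r" using hcond[OF a b] r by simp
  also have "\<dots> = (\<Sum>c<n. (A - 1\<^sub>m n) $$ (r,c) * (h a - h b) $ c)"
    by (rule index_mult_mat_vec_sum[OF minus_carrier_mat[OF one_carrier_mat] hab r])
  also have "\<dots> = (\<Sum>c<n. A $$ (r,c) * h a $ c - A $$ (r,c) * h b $ c - (if r = c then h a $ c - h b $ c else 0))"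
    by (intro sum.cong refl) (use r dimA dimh[OF a] dimh[OF b] in \<open>auto simp: algebra_simps\<close>)
  also have "\<dots> = (\<Sum>c<n. A $$ (r,c) * h a $ c) - (\<Sum>c<n. A $$ (r,c) * h b $ c) - (h a $ r - h b $ r)"
    using r by (simp add: sum_subtractf)
  finally show ?thesis by simp
qed

lemma x_step_index:
  assumes a: "a < N" and r: "r < n"
  shows "x a (Suc k) $ r = (\<Sum>c<n. A $$ (r,c) * x a k $ c) + (\<Sum>c<n. (B * K) $$ (r,c) * v a k $ c)"
proof -
  have "x a (Suc k) $ r = (A *\<^sub>v x a k) $ r + ((B * K) *\<^sub>v v a k) $ r"
    unfolding xdyn[OF a] ctrl[OF a] assoc_mult_mat_vec[OF dimB dimK v_carrier[OF a], symmetric]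
    using r BK_carrier by (subst index_add_vec) auto
  then show ?thesis
    using index_mult_mat_vec_sum[OF dimA x_carrier[OF a] r] index_mult_mat_vec_sum[OF BK_carrier v_carrier[OF a] r]
    by simp
qed

text \<open>The estimation error of agent \<open>i\<close>: the observer state \<open>v\<^sub>i\<close> tracks \<open>x\<^sub>i - h\<^sub>i\<close>.\<close>

definition est_err :: "nat \<Rightarrow> nat \<Rightarrow> nat \<Rightarrow> real" where
  "est_err i k r = v i k $ r - x i k $ r + h i $ r"

lemma innovation_index:
  assumes i: "i < N" and s: "s < q"
  shows "(finsum_vec TYPE(real) q (\<lambda>j. D $$ (i,j) \<cdot>\<^sub>v (C *\<^sub>v (v i k - v j k))) {..<N}
        - finsum_vec TYPE(real) q (\<lambda>j. D $$ (i,j) \<cdot>\<^sub>v (C *\<^sub>v x i k - C *\<^sub>v x j k - C *\<^sub>v (h i - h j))) {..<N}) $ s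
     = (\<Sum>j<N. D $$ (i,j) * (\<Sum>c<n. C $$ (s,c) * (est_err i k c - est_err j k c)))"
proof -
  define f1 where "f1 j = D $$ (i,j) \<cdot>\<^sub>v (C *\<^sub>v (v i k - v j k))" for j
  define f2 where "f2 j = D $$ (i,j) \<cdot>\<^sub>v (C *\<^sub>v x i k - C *\<^sub>v x j k - C *\<^sub>v (h i - h j))" for j
  have f1: "f1 \<in> {..<N} \<rightarrow> carrier_vec q" and f2: "f2 \<in> {..<N} \<rightarrow> carrier_vec q"
    using dimC unfolding f1_def f2_def by (auto intro!: carrier_vecI)
  have summand: "f1 j $ s - f2 j $ s = D $$ (i,j) * (\<Sum>c<n. C $$ (s,c) * (est_err i k c - est_err j k c))"
    if j: "j < N" for j
  proof -
    have vv: "v i k - v j k \<in> carrier_vec n" and hh: "h i - h j \<in> carrier_vec n"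
      using v_carrier[OF j] dimh[OF j] by (auto intro!: carrier_vecI)
    have Cv: "(C *\<^sub>v (v i k - v j k)) $ s = (\<Sum>c<n. C $$ (s,c) * (v i k $ c - v j k $ c))"
      unfolding index_mult_mat_vec_sum[OF dimC vv s]
      using v_carrier[OF i, of k] v_carrier[OF j, of k] by (intro sum.cong refl) auto
    have Ch: "(C *\<^sub>v (h i - h j)) $ s = (\<Sum>c<n. C $$ (s,c) * (h i $ c - h j $ c))"
      unfolding index_mult_mat_vec_sum[OF dimC hh s]
      using dimh[OF i] dimh[OF j] by (intro sum.cong refl) auto
    have "f1 j $ s = D $$ (i,j) * (\<Sum>c<n. C $$ (s,c) * (v i k $ c - v j k $ c))"
      using Cv s dimC unfolding f1_def by simp
    moreover have "f2 j $ s = D $$ (i,j) * ((\<Sum>c<n. C $$ (s,c) * x i k $ c) - (\<Sum>c<n. C $$ (s,c) * x j k $ c)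
        - (\<Sum>c<n. C $$ (s,c) * (h i $ c - h j $ c)))"
      using index_mult_mat_vec_sum[OF dimC x_carrier[OF i] s] index_mult_mat_vec_sum[OF dimC x_carrier[OF j] s]
        Ch s dimC unfolding f2_def by simp
    ultimately show ?thesis
      unfolding est_err_def by (simp add: algebra_simps sum.distrib sum_subtractf)
  qed
  have "(finsum_vec TYPE(real) q f1 {..<N} - finsum_vec TYPE(real) q f2 {..<N}) $ s
      = (\<Sum>j<N. f1 j $ s) - (\<Sum>j<N. f2 j $ s)"
    using s finsum_vec_closed[OF f2] index_finsum_vec[OF finite_lessThan s f1]
      index_finsum_vec[OF finite_lessThan s f2] by simp
  also have "\<dots> = (\<Sum>j<N. D $$ (i,j) * (\<Sum>c<n. C $$ (s,c) * (est_err i k c - est_err j k c)))"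
    using summand by (simp add: sum_subtractf[symmetric])
  finally show ?thesis unfolding f1_def f2_def .
qed

lemma est_err_step:
  assumes i: "i < N" and r: "r < n"
  shows "est_err i (Suc k) r = (\<Sum>c<n. A $$ (r,c) * est_err i k c) - ((\<Sum>c<n. A $$ (r,c) * h i $ c) - h i $ r)
      + (\<Sum>s<q. L $$ (r,s) * (\<Sum>j<N. D $$ (i,j) * (\<Sum>c<n. C $$ (s,c) * (est_err i k c - est_err j k c))))"
proof -
  define F where "F = finsum_vec TYPE(real) q (\<lambda>j. D $$ (i,j) \<cdot>\<^sub>v (C *\<^sub>v (v i k - v j k))) {..<N}
        - finsum_vec TYPE(real) q (\<lambda>j. D $$ (i,j) \<cdot>\<^sub>v (C *\<^sub>v x i k - C *\<^sub>v x j k - C *\<^sub>v (h i - h j))) {..<N}"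
  have F: "F \<in> carrier_vec q" unfolding F_def
    by (intro minus_carrier_vec finsum_vec_closed) (use dimC in \<open>auto intro!: carrier_vecI\<close>)
  have ABK: "A + B * K \<in> carrier_mat n n" using dimA BK_carrier by simp
  have "v i (Suc k) $ r = ((A + B * K) *\<^sub>v v i k) $ r + (L *\<^sub>v F) $ r"
    unfolding vdyn[OF i] F_def[symmetric] using r dimL by (subst index_add_vec) auto
  also have "((A + B * K) *\<^sub>v v i k) $ r = (\<Sum>c<n. A $$ (r,c) * v i k $ c) + (\<Sum>c<n. (B * K) $$ (r,c) * v i k $ c)"
    unfolding index_mult_mat_vec_sum[OF ABK v_carrier[OF i] r] sum.distrib[symmetric]
    using r carrier_matD[OF dimA] carrier_matD[OF BK_carrier] by (intro sum.cong refl) (auto simp: distrib_right)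
  also have "(L *\<^sub>v F) $ r = (\<Sum>s<q. L $$ (r,s) * (\<Sum>j<N. D $$ (i,j) * (\<Sum>c<n. C $$ (s,c) * (est_err i k c - est_err j k c))))"
    unfolding index_mult_mat_vec_sum[OF dimL F r] using innovation_index[OF i] unfolding F_def by simp
  finally have v_step: "v i (Suc k) $ r = (\<Sum>c<n. A $$ (r,c) * v i k $ c) + (\<Sum>c<n. (B * K) $$ (r,c) * v i k $ c)
      + (\<Sum>s<q. L $$ (r,s) * (\<Sum>j<N. D $$ (i,j) * (\<Sum>c<n. C $$ (s,c) * (est_err i k c - est_err j k c))))" .
  have A_err: "(\<Sum>c<n. A $$ (r,c) * est_err i k c) = (\<Sum>c<n. A $$ (r,c) * v i k $ c)
      - (\<Sum>c<n. A $$ (r,c) * x i k $ c) + (\<Sum>c<n. A $$ (r,c) * h i $ c)"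
    unfolding est_err_def by (simp add: algebra_simps sum.distrib sum_subtractf)
  show ?thesis unfolding est_err_def[of i "Suc k" r] using v_step x_step_index[OF i r, of k] A_err by linarith
qed

definition rel_err :: "nat \<Rightarrow> nat \<Rightarrow> nat \<Rightarrow> real" where
  "rel_err i k r = est_err (Suc i) k r - est_err 0 k r"

text \<open>The relative errors form a closed linear system: the offset drifts cancel by
  \<open>offset_drift_uniform\<close>, and the disagreement terms become the coupling \<open>I - reduced_mat D\<close>.\<close>

lemma rel_err_step:
  assumes i: "i < N - 1" and r: "r < n"
  shows "rel_err i (Suc k) r = (\<Sum>c<n. A $$ (r,c) * rel_err i k c)
      + (\<Sum>s<q. L $$ (r,s) * (\<Sum>c<n. C $$ (s,c) *
           (\<Sum>l<N - 1. ((if i = l then 1 else 0) - D $$ (Suc i, Suc l) + D $$ (0, Suc l)) * rel_err l k c)))"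
proof -
  define m where "m = N - 1"
  have N: "N = Suc m" using N_pos unfolding m_def by simp
  have i1: "Suc i < N" and i0: "0 < N" using i N_pos by auto
  define Y where "Y a s = (\<Sum>j<N. D $$ (a,j) * (\<Sum>c<n. C $$ (s,c) * (est_err a k c - est_err j k c)))" for a s
  have Y_swap: "Y a s = (\<Sum>c<n. C $$ (s,c) * (\<Sum>j<N. D $$ (a,j) * (est_err a k c - est_err j k c)))" for a s
    unfolding Y_def by (simp add: sum_distrib_left sum.swap[of _ "{..<N}"] mult.left_commute)
  have row_sum: "(\<Sum>j<Suc m. D $$ (a,j)) = 1" if "a < Suc m" for a using D_row_sum[of a] that N by simp
  have disagreement: "(\<Sum>j<N. D $$ (Suc i,j) * (est_err (Suc i) k c - est_err j k c))
      - (\<Sum>j<N. D $$ (0,j) * (est_err 0 k c - est_err j k c))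
      = (\<Sum>l<m. ((if i = l then 1 else 0) - D $$ (Suc i, Suc l) + D $$ (0, Suc l)) * rel_err l k c)" for c
    using stochastic_disagreement_identity[of m D i "\<lambda>j. est_err j k c", OF row_sum] i N
    unfolding rel_err_def m_def by simp
  have L_part: "(\<Sum>s<q. L $$ (r,s) * (\<Sum>c<n. C $$ (s,c) *
        (\<Sum>l<m. ((if i = l then 1 else 0) - D $$ (Suc i, Suc l) + D $$ (0, Suc l)) * rel_err l k c)))
      = (\<Sum>s<q. L $$ (r,s) * Y (Suc i) s) - (\<Sum>s<q. L $$ (r,s) * Y 0 s)"
    unfolding Y_swap disagreement[symmetric] by (simp add: right_diff_distrib sum_subtractf)
  have A_part: "(\<Sum>c<n. A $$ (r,c) * rel_err i k c)
      = (\<Sum>c<n. A $$ (r,c) * est_err (Suc i) k c) - (\<Sum>c<n. A $$ (r,c) * est_err 0 k c)"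
    unfolding rel_err_def by (simp add: right_diff_distrib sum_subtractf)
  show ?thesis
    using est_err_step[OF i1 r, of k] est_err_step[OF i0 r, of k] offset_drift_uniform[OF i1 i0 r] A_part L_part
    unfolding rel_err_def[of i "Suc k"] Y_def m_def by linarith
qed

definition rel_err_mat :: "nat \<Rightarrow> complex mat" where
  "rel_err_mat k = mat n (N - 1) (\<lambda>(r,i). complex_of_real (rel_err i k r))"

lemma rel_err_mat_step:
  "rel_err_mat (Suc k) = cmat A * rel_err_mat k
     + (cmat L * cmat C) * (rel_err_mat k * (1\<^sub>m (N - 1) - transpose_mat (reduced_mat (cmat D))))"
proof -
  define m where "m = N - 1"
  define W where "W = rel_err_mat k"
  define X where "X = 1\<^sub>m m - transpose_mat (reduced_mat (cmat D))"
  define coupling where "coupling i l = (if i = l then 1 else 0) - D $$ (Suc i, Suc l) + D $$ (0, Suc l)" for i l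
  have N: "N = Suc m" using N_pos unfolding m_def by simp
  have W: "W \<in> carrier_mat n m" and X: "X \<in> carrier_mat m m"
    using D_carrier unfolding W_def X_def rel_err_mat_def m_def reduced_mat_def cmat_def by auto
  have WX: "W * X \<in> carrier_mat n m" and CWX: "cmat C * (W * X) \<in> carrier_mat q m"
    using W X dimC by (auto simp: cmat_def)
  have X_index: "X $$ (l,i) = complex_of_real (coupling i l)" if "l < m" "i < m" for l i
    using that D_carrier N unfolding X_def coupling_def reduced_mat_def cmat_def by auto
  show ?thesis unfolding m_def[symmetric] W_def[symmetric] X_def[symmetric]
  proof (rule eq_matI)
    fix r i assume "r < dim_row (cmat A * W + (cmat L * cmat C) * (W * X))"
      "i < dim_col (cmat A * W + (cmat L * cmat C) * (W * X))"
    hence r: "r < n" and i: "i < m" using dimA dimL dimC W X by (auto simp: cmat_def)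
    have WX_index: "(W * X) $$ (c,i) = complex_of_real (\<Sum>l<m. coupling i l * rel_err l k c)" if c: "c < n" for c
    proof -
      have "(W * X) $$ (c,i) = (\<Sum>l<m. W $$ (c,l) * X $$ (l,i))" by (rule index_mult_mat_sum[OF W X c i])
      also have "\<dots> = (\<Sum>l<m. complex_of_real (coupling i l * rel_err l k c))"
        using c i X_index unfolding W_def rel_err_mat_def m_def by (intro sum.cong refl) auto
      finally show ?thesis by simp
    qed
    have "((cmat L * cmat C) * (W * X)) $$ (r,i) = (cmat L * (cmat C * (W * X))) $$ (r,i)"
      using assoc_mult_mat[of "cmat L" n q "cmat C" n "W * X" m] dimL dimC WX by (simp add: cmat_def)
    also have "\<dots> = complex_of_real (\<Sum>s<q. L $$ (r,s) * (\<Sum>c<n. C $$ (s,c) * (\<Sum>l<m. coupling i l * rel_err l k c)))"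
      by (intro cmat_mult_of_real_index[OF dimL CWX r i] cmat_mult_of_real_index[OF dimC WX _ i] WX_index)
    finally have LC_part: "((cmat L * cmat C) * (W * X)) $$ (r,i)
      = complex_of_real (\<Sum>s<q. L $$ (r,s) * (\<Sum>c<n. C $$ (s,c) * (\<Sum>l<m. coupling i l * rel_err l k c)))" .
    have A_part: "(cmat A * W) $$ (r,i) = complex_of_real (\<Sum>c<n. A $$ (r,c) * rel_err i k c)"
      by (rule cmat_mult_of_real_index[OF dimA W r i]) (use i in \<open>simp add: W_def rel_err_mat_def m_def\<close>)
    have "(cmat A * W + (cmat L * cmat C) * (W * X)) $$ (r,i) = (cmat A * W) $$ (r,i) + ((cmat L * cmat C) * (W * X)) $$ (r,i)"
      using r i W X dimA dimL by (simp add: cmat_def)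
    also have "\<dots> = complex_of_real (rel_err i (Suc k) r)"
      unfolding A_part LC_part rel_err_step[OF i[unfolded m_def] r] coupling_def m_def by simp
    finally show "rel_err_mat (Suc k) $$ (r,i) = (cmat A * W + (cmat L * cmat C) * (W * X)) $$ (r,i)"
      using r i unfolding rel_err_mat_def m_def by simp
  qed (use W X dimA dimL in \<open>auto simp: rel_err_mat_def cmat_def m_def\<close>)
qed

text \<open>The relative estimation errors vanish: the spectral reduction identifies the eigenvalues of
  \<open>reduced_mat D\<close> with \<open>\<lambda>\<^sub>2, \<dots>, \<lambda>\<^sub>N\<close>, and the consensus cascade lemma applies.\<close>

lemma rel_err_tendsto_zero:
  assumes eigs: "char_poly (cmat D) = [:-1, 1:] * (\<Prod>i\<in>{1..<N}. [:- lam i, 1:])"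
    and stabL: "\<And>i. i \<in> {1..<N} \<Longrightarrow> schur_stable (cmat A + (1 - lam i) \<cdot>\<^sub>m (cmat L * cmat C))"
    and i: "i < N - 1" and c: "c < n"
  shows "(\<lambda>k. rel_err i k c) \<longlonglongrightarrow> 0"
proof -
  define m where "m = N - 1"
  define S where "S = transpose_mat (reduced_mat (cmat D))"
  have N: "N = Suc m" using N_pos unfolding m_def by simp
  have DC: "cmat D \<in> carrier_mat (Suc m) (Suc m)" using D_carrier N by (simp add: cmat_def)
  have R: "reduced_mat (cmat D) \<in> carrier_mat m m" and S: "S \<in> carrier_mat m m"
    using DC unfolding S_def reduced_mat_def by auto
  have row_sum: "(\<Sum>j<Suc m. cmat D $$ (a,j)) = 1" if a: "a < Suc m" for a
  proof -
    have "(\<Sum>j<Suc m. cmat D $$ (a,j)) = (\<Sum>j<Suc m. complex_of_real (D $$ (a,j)))"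
      using a N D_carrier by (intro sum.cong refl) (simp add: cmat_def)
    also have "\<dots> = complex_of_real (\<Sum>j<N. D $$ (a,j))" by (simp only: N of_real_sum)
    also have "\<dots> = 1" using D_row_sum[of a] a N by (simp del: sum.lessThan_Suc)
    finally show ?thesis .
  qed
  have "[:-1,1:] * char_poly (reduced_mat (cmat D)) = [:-1, 1:] * (\<Prod>i\<in>{1..<N}. [:- lam i, 1:])"
    using char_poly_reduced_mat[OF DC row_sum] eigs by simp
  then have "char_poly (reduced_mat (cmat D)) = (\<Prod>i\<in>{1..<N}. [:- lam i, 1:])"
    using mult_left_cancel[of "[:-1,1::complex:]"] by simp
  also have "\<dots> = (\<Prod>\<mu>\<leftarrow>map lam [1..<N]. [:- \<mu>, 1:])"
    by (simp add: prod.distinct_set_conv_list[symmetric] comp_def)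
  finally have cp: "char_poly S = (\<Prod>\<mu>\<leftarrow>map lam [1..<N]. [:- \<mu>, 1:])"
    unfolding S_def using char_poly_transpose_mat[OF R] by simp
  have st: "schur_stable (cmat A + (1 - \<mu>) \<cdot>\<^sub>m (cmat L * cmat C))" if "\<mu> \<in> set (map lam [1..<N])" for \<mu>
    using that stabL by auto
  have "(\<lambda>k. rel_err_mat k $$ (c,i)) \<longlonglongrightarrow> 0"
  proof (rule consensus_cascade_tendsto_zero[OF _ _ S _ _ cp st c])
    show "cmat A \<in> carrier_mat n n" "cmat L * cmat C \<in> carrier_mat n n"
      using dimA dimL dimC by (auto simp: cmat_def)
    show "rel_err_mat k \<in> carrier_mat n m" for k unfolding rel_err_mat_def m_def by simp
    show "rel_err_mat (Suc k) = cmat A * rel_err_mat k + (cmat L * cmat C) * (rel_err_mat k * (1\<^sub>m m - S))" for k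
      unfolding S_def m_def by (rule rel_err_mat_step)
  qed (use i in \<open>unfold m_def\<close>)
  then have "(\<lambda>k. complex_of_real (rel_err i k c)) \<longlonglongrightarrow> complex_of_real 0"
    using i c unfolding rel_err_mat_def by simp
  then show ?thesis by (simp only: tendsto_of_real_iff)
qed

definition form_err :: "nat \<Rightarrow> nat \<Rightarrow> nat \<Rightarrow> real" where
  "form_err a k r = x a k $ r - h a $ r - x 0 k $ r + h 0 $ r"

lemma form_err_step:
  assumes a: "a < N" and r: "r < n"
  shows "form_err a (Suc k) r = (\<Sum>c<n. (A + B * K) $$ (r,c) * form_err a k c)
     + (\<Sum>c<n. (B * K) $$ (r,c) * (est_err a k c - est_err 0 k c))"
proof -
  have split: "(\<Sum>c<n. (A + B * K) $$ (r,c) * form_err a k c)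
      = (\<Sum>c<n. A $$ (r,c) * form_err a k c) + (\<Sum>c<n. (B * K) $$ (r,c) * form_err a k c)"
    unfolding sum.distrib[symmetric] using r carrier_matD[OF dimA] carrier_matD[OF BK_carrier]
    by (intro sum.cong refl) (auto simp: distrib_right)
  have A_part: "(\<Sum>c<n. A $$ (r,c) * form_err a k c) = (\<Sum>c<n. A $$ (r,c) * x a k $ c)
      - (\<Sum>c<n. A $$ (r,c) * h a $ c) - (\<Sum>c<n. A $$ (r,c) * x 0 k $ c) + (\<Sum>c<n. A $$ (r,c) * h 0 $ c)"
    unfolding form_err_def by (simp add: algebra_simps sum.distrib sum_subtractf)
  have BK_part: "(\<Sum>c<n. (B * K) $$ (r,c) * form_err a k c) + (\<Sum>c<n. (B * K) $$ (r,c) * (est_err a k c - est_err 0 k c))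
      = (\<Sum>c<n. (B * K) $$ (r,c) * v a k $ c) - (\<Sum>c<n. (B * K) $$ (r,c) * v 0 k $ c)"
    unfolding form_err_def est_err_def by (simp add: algebra_simps sum.distrib sum_subtractf)
  show ?thesis
    using x_step_index[OF a r, of k] x_step_index[OF N_pos r, of k] split A_part BK_part
      offset_drift_uniform[OF a N_pos r]
    unfolding form_err_def[of a "Suc k" r] by linarith
qed

text \<open>Input-to-state stability of \<open>A + BK\<close> turns vanishing estimation errors into vanishing formation errors.\<close>

lemma form_err_tendsto_zero:
  assumes stabK: "schur_stable (cmat (A + B * K))"
    and est_lim: "\<And>c. c < n \<Longrightarrow> (\<lambda>k. est_err a k c - est_err 0 k c) \<longlonglongrightarrow> 0"
    and a: "a < N" and r: "r < n"
  shows "(\<lambda>k. form_err a k r) \<longlonglongrightarrow> 0"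
proof (rule schur_stable_input_to_state_real[of "A + B * K" n "form_err a"
      "\<lambda>k r'. \<Sum>c<n. (B * K) $$ (r',c) * (est_err a k c - est_err 0 k c)", OF _ stabK form_err_step[OF a] _ r])
  show "A + B * K \<in> carrier_mat n n" using dimA BK_carrier by simp
  show "(\<lambda>k. \<Sum>c<n. (B * K) $$ (r',c) * (est_err a k c - est_err 0 k c)) \<longlonglongrightarrow> 0" for r'
    by (intro tendsto_null_sum tendsto_mult_right_zero est_lim) auto
qed

theorem formation_achieved:
  assumes eigs: "char_poly (cmat D) = [:-1, 1:] * (\<Prod>i\<in>{1..<N}. [:- lam i, 1:])"
    and stabK: "schur_stable (cmat (A + B * K))"
    and stabL: "\<And>i. i \<in> {1..<N} \<Longrightarrow> schur_stable (cmat A + (1 - lam i) \<cdot>\<^sub>m (cmat L * cmat C))"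
    and i: "i < N" and j: "j < N"
  shows "(\<lambda>k. vnorm (x i k - h i - x j k + h j)) \<longlonglongrightarrow> 0"
proof -
  have est_lim: "(\<lambda>k. est_err a k c - est_err 0 k c) \<longlonglongrightarrow> 0" if a: "a < N" and "c < n" for a c
  proof (cases a)
    case (Suc l)
    then show ?thesis using rel_err_tendsto_zero[OF eigs stabL, of l c] a \<open>c < n\<close>
      unfolding rel_err_def by simp
  qed simp
  have form_lim: "(\<lambda>k. form_err a k r) \<longlonglongrightarrow> 0" if "a < N" "r < n" for a r
    using form_err_tendsto_zero[OF stabK est_lim that] that by blast
  have "vnorm (x i k - h i - x j k + h j) = sqrt (\<Sum>r<n. (form_err i k r - form_err j k r)^2)" for k
    unfolding vnorm_def using dimh[OF i] dimh[OF j] x_carrier[OF i, of k] x_carrier[OF j, of k]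
    by (simp add: form_err_def algebra_simps)
  moreover have "(\<lambda>k. sqrt (\<Sum>r<n. (form_err i k r - form_err j k r)^2)) \<longlonglongrightarrow> sqrt (\<Sum>r<n. (0 - 0)^2)"
    by (intro tendsto_real_sqrt tendsto_sum tendsto_power tendsto_diff form_lim i j) auto
  ultimately show ?thesis by simp
qed

end

theorem theorem5:
  fixes N n p q :: nat
    and E :: "(nat \<times> nat) set"
    and D A B C K L :: "real mat"
    and lam :: "nat \<Rightarrow> complex"
    and h :: "nat \<Rightarrow> real vec"
    and x v u :: "nat \<Rightarrow> nat \<Rightarrow> real vec"
  assumes G: "in_Gamma N E"
    and D: "row_stochastic_of N E D"
    and eigs: "char_poly (cmat D) = [:-1, 1:] * (\<Prod>i\<in>{1..<N}. [:- lam i, 1:])"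
    and dimA: "A \<in> carrier_mat n n" and dimB: "B \<in> carrier_mat n p"
    and dimC: "C \<in> carrier_mat q n" and dimK: "K \<in> carrier_mat p n"
    and dimL: "L \<in> carrier_mat n q"
    and dimh: "\<And>i. i < N \<Longrightarrow> h i \<in> carrier_vec n"
    and stabK: "schur_stable (cmat (A + B * K))"
    and stabL: "\<And>i. i \<in> {1..<N} \<Longrightarrow> schur_stable (cmat A + (1 - lam i) \<cdot>\<^sub>m (cmat L * cmat C))"
    and hcond: "\<And>i j. i < N \<Longrightarrow> j < N \<Longrightarrow> (A - 1\<^sub>m n) *\<^sub>v (h i - h j) = 0\<^sub>v n"
    and x0: "\<And>i. i < N \<Longrightarrow> x i 0 \<in> carrier_vec n"
    and v0: "\<And>i. i < N \<Longrightarrow> v i 0 \<in> carrier_vec n"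
    and ctrl: "\<And>i k. i < N \<Longrightarrow> u i k = K *\<^sub>v v i k"
    and xdyn: "\<And>i k. i < N \<Longrightarrow> x i (Suc k) = A *\<^sub>v x i k + B *\<^sub>v u i k"
    and vdyn: "\<And>i k. i < N \<Longrightarrow> v i (Suc k) =
        (A + B * K) *\<^sub>v v i k
        + L *\<^sub>v (finsum_vec TYPE(real) q (\<lambda>j. D $$ (i,j) \<cdot>\<^sub>v (C *\<^sub>v (v i k - v j k))) {..<N}
                 - finsum_vec TYPE(real) q
                     (\<lambda>j. D $$ (i,j) \<cdot>\<^sub>v (C *\<^sub>v x i k - C *\<^sub>v x j k - C *\<^sub>v (h i - h j))) {..<N})"
  shows "\<forall>i<N. \<forall>j<N. (\<lambda>k. vnorm (x i k - h i - x j k + h j)) \<longlonglongrightarrow> 0"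
proof (intro allI impI)
  fix i j assume i: "i < N" and j: "j < N"
  have "formation_protocol N n p q D A B C K L h x v u"
  proof
    show "0 < N" using i by simp
    show "D \<in> carrier_mat N N" "\<And>i. i < N \<Longrightarrow> (\<Sum>j<N. D $$ (i,j)) = 1"
      using D unfolding row_stochastic_of_def by auto
  qed (fact assms)+
  then show "(\<lambda>k. vnorm (x i k - h i - x j k + h j)) \<longlonglongrightarrow> 0"
    by (rule formation_protocol.formation_achieved[OF _ eigs stabK stabL i j])
qed

end
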